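(* Let $(\mathcal{P},\cdot)$ be a finite-dimensional complex admissible Poisson algebra such that $\mathfrak{g}_{\mathcal{P}}$ is a simple complex Lie algebra. Then $U\bullet V=0$ for all $U,V\in\mathcal{P}$; equivalently $U\cdot V=\{U,V\}$ for all $U,V$, i.e. $\mathcal{A}_{\mathcal{P}}^2=\{0\}$.
   Context: Associator: $A(X,Y,Z)=(X\cdot Y)\cdot Z-X\cdot(Y\cdot Z)$. An admissible Poisson algebra is a vector space $\mathcal{P}$ with a bilinear product $\cdot$ satisfying $3A(X,Y,Z)=(X\cdot Z)\cdot Y+(Y\cdot Z)\cdot X-(Y\cdot X)\cdot Z-(Z\cdot X)\cdot Y$ for all $X,Y,Z$. $\{X,Y\}=\frac12(X\cdot Y-Y\cdot X)$, $X\bullet Y=\frac12(X\cdot Y+Y\cdot X)$; $\mathfrak{g}_{\mathcal{P}}=(\mathcal{P},\{\,,\,\})$, $\mathcal{A}_{\mathcal{P}}=(\mathcal{P},\bullet)$; these form a Poisson algebra (Lie bracket, commutative associative product, Leibniz rule $\{X\bullet Y,Z\}=X\bullet\{Y,Z\}+\{X,Z\}\bullet Y$). *)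

theory Defs
  imports Complex_Main
begin

text \<open>A complex vector space is modelled as a type 'a of class ab_group_add together with
  a scalar multiplication sc by complex numbers satisfying the vector space axioms
  (library locale vector_space).\<close>

definition cbilinear :: "(complex \<Rightarrow> 'a::ab_group_add \<Rightarrow> 'a) \<Rightarrow> ('a \<Rightarrow> 'a \<Rightarrow> 'a) \<Rightarrow> bool" where
  "cbilinear sc m \<longleftrightarrow>
     (\<forall>x y z. m (x + y) z = m x z + m y z) \<and>
     (\<forall>x y z. m x (y + z) = m x y + m x z) \<and>
     (\<forall>c x y. m (sc c x) y = sc c (m x y)) \<and>
     (\<forall>c x y. m x (sc c y) = sc c (m x y))"

definition cfinite_dim :: "(complex \<Rightarrow> 'a::ab_group_add \<Rightarrow> 'a) \<Rightarrow> bool" where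
  "cfinite_dim sc \<longleftrightarrow> (\<exists>S::'a set. finite S \<and> module.span sc S = UNIV)"

definition assoc :: "('a::ab_group_add \<Rightarrow> 'a \<Rightarrow> 'a) \<Rightarrow> 'a \<Rightarrow> 'a \<Rightarrow> 'a \<Rightarrow> 'a" where
  "assoc m X Y Z = m (m X Y) Z - m X (m Y Z)"

definition admissible_poisson :: "(complex \<Rightarrow> 'a::ab_group_add \<Rightarrow> 'a) \<Rightarrow> ('a \<Rightarrow> 'a \<Rightarrow> 'a) \<Rightarrow> bool" where
  "admissible_poisson sc m \<longleftrightarrow> cbilinear sc m \<and>
     (\<forall>X Y Z. sc 3 (assoc m X Y Z) =
        m (m X Z) Y + m (m Y Z) X - m (m Y X) Z - m (m Z X) Y)"

definition pbracket :: "(complex \<Rightarrow> 'a::ab_group_add \<Rightarrow> 'a) \<Rightarrow> ('a \<Rightarrow> 'a \<Rightarrow> 'a) \<Rightarrow> 'a \<Rightarrow> 'a \<Rightarrow> 'a" where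
  "pbracket sc m X Y = sc (1/2) (m X Y - m Y X)"

definition pbullet :: "(complex \<Rightarrow> 'a::ab_group_add \<Rightarrow> 'a) \<Rightarrow> ('a \<Rightarrow> 'a \<Rightarrow> 'a) \<Rightarrow> 'a \<Rightarrow> 'a \<Rightarrow> 'a" where
  "pbullet sc m X Y = sc (1/2) (m X Y + m Y X)"

definition lie_ideal :: "(complex \<Rightarrow> 'a::ab_group_add \<Rightarrow> 'a) \<Rightarrow> ('a \<Rightarrow> 'a \<Rightarrow> 'a) \<Rightarrow> 'a set \<Rightarrow> bool" where
  "lie_ideal sc br I \<longleftrightarrow> module.subspace sc I \<and> (\<forall>x. \<forall>y\<in>I. br x y \<in> I)"

definition simple_lie :: "(complex \<Rightarrow> 'a::ab_group_add \<Rightarrow> 'a) \<Rightarrow> ('a \<Rightarrow> 'a \<Rightarrow> 'a) \<Rightarrow> bool" where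
  "simple_lie sc br \<longleftrightarrow> (\<exists>x y. br x y \<noteq> 0) \<and>
     (\<forall>I. lie_ideal sc br I \<longrightarrow> I = {0} \<or> I = UNIV)"

end

theory Submission
  imports Defs
begin

text \<open>The symmetrised product \<open>\<bullet>\<close> is commutative and associative and the bracket satisfies
  the Leibniz rule; both are signed sums of permuted instances of the admissibility identity.
  The Leibniz rule makes every \<open>\<bullet>\<close>-idempotent central, hence zero by simplicity, and makes the
  \<open>\<bullet>\<close>-annihilator a Lie ideal. In finite dimension a commutative associative algebra without
  nonzero idempotents has nilpotent multiplication operators, and then a minimal nonzero ideal is
  annihilated. So the annihilator is a nonzero Lie ideal, hence everything.\<close>

lemma (in vector_space) linear_funpow:
  assumes "Vector_Spaces.linear scale scale f"
  shows "Vector_Spaces.linear scale scale (f ^^ n)"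
proof (induction n)
  case 0
  show ?case by (simp add: linear_ident)
next
  case (Suc n)
  then show ?case
    using Vector_Spaces.linear_compose[OF Suc assms] by (simp add: o_def)
qed

lemma (in vector_space) finite_dimensional_if_finite_span:
  assumes "finite S" and "span S = UNIV"
  obtains B where "finite_dimensional_vector_space scale B"
proof -
  obtain B where B: "independent B" "UNIV \<subseteq> span B"
    using basis_exists[of UNIV] by blast
  have "finite B"
    using independent_span_bound[OF assms(1) B(1)] assms(2) by simp
  with B show thesis
    by (intro that) (unfold_locales, auto)
qed

lemma (in finite_dimensional_vector_space) range_funpow_stabilizes:
  assumes f: "Vector_Spaces.linear scale scale f"
  obtains k where "\<And>j. k \<le> j \<Longrightarrow> range (f ^^ j) = range (f ^^ k)"
proof -
  obtain k where k: "\<And>j. dim (range (f ^^ k)) \<le> dim (range (f ^^ j))"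
    using ex_has_least_nat[of "\<lambda>_. True" 0 "\<lambda>j. dim (range (f ^^ j))"] by blast
  have subspace_range: "subspace (range (f ^^ j))" for j
    using module_hom.subspace_image[of scale scale "f ^^ j" UNIV] linear_funpow[OF f]
    by (simp add: module_hom_eq_linear)
  have "range (f ^^ j) = range (f ^^ k)" if "k \<le> j" for j
  proof (rule subspace_dim_equal[OF subspace_range subspace_range])
    have "f ^^ j = (f ^^ k) \<circ> (f ^^ (j - k))"
      using that by (simp add: funpow_add[symmetric])
    then show "range (f ^^ j) \<subseteq> range (f ^^ k)"
      by (metis image_comp image_subsetI rangeI)
  qed (rule k)
  then show thesis by (rule that)
qed

locale comm_assoc_algebra = vector_space scale
  for scale :: "'b::field \<Rightarrow> 'a::ab_group_add \<Rightarrow> 'a" +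
  fixes mul :: "'a \<Rightarrow> 'a \<Rightarrow> 'a"
  assumes mul_add_right: "mul x (y + z) = mul x y + mul x z"
    and mul_scale_right: "mul x (scale c y) = scale c (mul x y)"
    and mul_commute: "mul x y = mul y x"
    and mul_assoc: "mul (mul x y) z = mul x (mul y z)"
begin

lemma linear_mul: "Vector_Spaces.linear scale scale (mul a)"
  by (simp add: Vector_Spaces.linear_iff mul_add_right mul_scale_right vector_space_axioms)

lemma mul_zero_right [simp]: "mul x 0 = 0"
  using mul_add_right[of x 0 0] by simp

lemma mul_zero_left [simp]: "mul 0 x = 0"
  by (simp add: mul_commute[of 0])

lemma mul_minus_right: "mul x (- y) = - mul x y"
  using mul_add_right[of x "- y" y] by (simp add: eq_neg_iff_add_eq_0)

lemma mul_left_commute: "mul x (mul y z) = mul y (mul x z)"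
  by (metis mul_assoc mul_commute)

lemma funpow_mul_left: "mul ((mul a ^^ n) x) y = (mul a ^^ n) (mul x y)"
  by (induction n) (simp_all add: mul_assoc)

definition ideal :: "'a set \<Rightarrow> bool" where
  "ideal V \<longleftrightarrow> subspace V \<and> (\<forall>a. \<forall>v\<in>V. mul a v \<in> V)"

lemma ideal_image_mul:
  assumes "ideal V"
  shows "ideal (mul a ` V)"
  using assms module_hom.subspace_image[of scale scale "mul a" V] linear_mul
  by (auto simp: ideal_def module_hom_eq_linear mul_left_commute[of _ a])

end

locale finite_dim_comm_assoc_algebra =
  comm_assoc_algebra scale mul + finite_dimensional_vector_space scale Basis
  for scale :: "'b::field \<Rightarrow> 'a::ab_group_add \<Rightarrow> 'a" and mul and Basis
begin

text \<open>With \<open>T = mul a\<close> and \<open>range (T\<^sup>j)\<close> stable from \<open>j = k\<close> on, the element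
  \<open>c = T\<^sup>k a\<close> acts as \<open>T\<^sup>n\<close> (\<open>n = k + 1\<close>) and lies in \<open>range (T\<^sup>2\<^sup>n)\<close>, say
  \<open>c = T\<^sup>2\<^sup>n y\<close>; then \<open>e = T\<^sup>n y\<close> is idempotent and \<open>c = c \<bullet> e\<close>.\<close>

lemma mul_nilpotent_if_no_idempotent:
  assumes no_idempotent: "\<And>e. mul e e = e \<Longrightarrow> e = 0"
  obtains n where "\<And>x. (mul a ^^ n) x = 0"
proof -
  let ?T = "mul a"
  obtain k where k: "\<And>j. k \<le> j \<Longrightarrow> range (?T ^^ j) = range (?T ^^ k)"
    using range_funpow_stabilizes[OF linear_mul] by blast
  define n where "n = Suc k"
  define c where "c = (?T ^^ k) a"
  have c_acts: "mul c x = (?T ^^ n) x" for x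
    unfolding c_def n_def funpow_mul_left by (simp add: funpow_swap1)
  have "c \<in> range (?T ^^ (n + n))"
    using k[of "n + n"] by (simp add: c_def n_def)
  then obtain y where y: "c = (?T ^^ (n + n)) y"
    by blast
  define e where "e = (?T ^^ n) y"
  have "mul c e = (?T ^^ n) ((?T ^^ n) y)"
    by (simp add: c_acts e_def)
  also have "\<dots> = c"
    by (simp add: y funpow_add)
  finally have c_e: "mul c e = c" .
  have "mul e e = (?T ^^ n) (mul y e)"
    unfolding e_def funpow_mul_left ..
  also have "\<dots> = mul (mul c e) y"
    by (simp add: c_acts funpow_mul_left mul_commute[of y])
  also have "\<dots> = e"
    unfolding c_e by (simp add: c_acts e_def)
  finally have "e = 0"
    by (rule no_idempotent)
  then have "c = 0"
    using c_e by simp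
  then show thesis
    by (intro that[of n]) (simp flip: c_acts)
qed

text \<open>A minimal nonzero ideal \<open>V\<close> is killed by every \<open>a\<close>: otherwise \<open>a V = V\<close>,
  which a nilpotent \<open>mul a\<close> cannot do.\<close>

lemma annihilator_nonzero:
  fixes u :: 'a
  assumes nilpotent: "\<And>a. \<exists>n. \<forall>x. (mul a ^^ n) x = 0"
    and "u \<noteq> 0"
  obtains v where "v \<noteq> 0" and "\<And>a. mul a v = 0"
proof -
  have "ideal UNIV \<and> UNIV \<noteq> {0::'a}"
    using \<open>u \<noteq> 0\<close> by (auto simp: ideal_def set_eq_iff)
  then obtain V where V: "ideal V" "V \<noteq> {0}"
    and minimal: "\<And>W. ideal W \<Longrightarrow> W \<noteq> {0} \<Longrightarrow> dim V \<le> dim W"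
    using ex_has_least_nat[of "\<lambda>V. ideal V \<and> V \<noteq> {0}" UNIV dim] by blast
  have subV: "subspace V"
    using V(1) by (simp add: ideal_def)
  have "mul a ` V = {0}" for a
  proof (rule ccontr)
    assume "mul a ` V \<noteq> {0}"
    then have "dim V \<le> dim (mul a ` V)"
      using minimal ideal_image_mul[OF V(1)] by blast
    moreover have "mul a ` V \<subseteq> V"
      using V(1) by (auto simp: ideal_def)
    ultimately have aV: "mul a ` V = V"
      using subspace_dim_equal ideal_image_mul[OF V(1)] subV by (auto simp: ideal_def)
    have powers: "(mul a ^^ n) ` V = V" for n
      by (induction n) (simp_all add: aV flip: image_image)
    obtain n where "\<forall>x. (mul a ^^ n) x = 0"
      using nilpotent by blast
    then have "V \<subseteq> {0}"
      using powers[of n] by auto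
    then show False
      using V(2) subspace_0[OF subV] by blast
  qed
  moreover obtain v where "v \<in> V" "v \<noteq> 0"
    using V(2) subspace_0[OF subV] by blast
  ultimately show thesis
    using that by blast
qed

end

locale leibniz_algebra = comm_assoc_algebra scale mul
  for scale :: "complex \<Rightarrow> 'a::ab_group_add \<Rightarrow> 'a" and mul +
  fixes br :: "'a \<Rightarrow> 'a \<Rightarrow> 'a"
  assumes br_add_right: "br x (y + z) = br x y + br x z"
    and br_scale_right: "br x (scale c y) = scale c (br x y)"
    and br_antisym: "br x y = - br y x"
    and leibniz: "br (mul x y) z = mul x (br y z) + mul (br x z) y"
begin

lemma br_zero_right [simp]: "br x 0 = 0"
  using br_add_right[of x 0 0] by simp

lemma br_zero_left [simp]: "br 0 x = 0"
  by (simp add: br_antisym[of 0])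

lemma lie_ideal_center: "lie_ideal scale br {v. \<forall>x. br x v = 0}"
  unfolding lie_ideal_def subspace_def by (simp add: br_add_right br_scale_right)

lemma lie_ideal_annihilator: "lie_ideal scale br {v. \<forall>x. mul x v = 0}"
  unfolding lie_ideal_def
proof (intro conjI allI ballI)
  show "subspace {v. \<forall>x. mul x v = 0}"
    unfolding subspace_def by (simp add: mul_add_right mul_scale_right)
next
  fix x v
  assume "v \<in> {v. \<forall>x. mul x v = 0}"
  then have "mul v w = 0" and "mul v (br w x) = 0" for w
    by (simp_all add: mul_commute[of v])
  then have "mul (br v x) w = 0" for w
    using leibniz[of v w x] by simp
  then show "br x v \<in> {v. \<forall>x. mul x v = 0}"
    using br_antisym[of x v] by (simp add: mul_minus_right mul_commute[of _ "br v x"])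
qed

text \<open>Leibniz for \<open>e \<bullet> e = e\<close> gives \<open>{e, z} = 2 e \<bullet> {e, z}\<close>; multiplying by \<open>e\<close>
  shows \<open>e \<bullet> {e, z} = 0\<close>.\<close>

lemma br_eq_0_if_idempotent:
  assumes e: "mul e e = e"
  shows "br e z = 0"
proof -
  define u where "u = br e z"
  have u: "u = mul e u + mul e u"
    using leibniz[of e e z] unfolding e u_def[symmetric] by (simp only: mul_commute[of u])
  have "mul e u = mul e u + mul e u"
    by (subst (1) u) (simp add: mul_add_right flip: mul_assoc add: e)
  then have "mul e u = 0"
    by simp
  then show ?thesis
    using u by (simp add: u_def)
qed

lemma mul_eq_zero_if_simple_lie:
  assumes "finite_dimensional_vector_space scale B"
    and simple: "simple_lie scale br"
  shows "mul x y = 0"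
proof -
  interpret finite_dim_comm_assoc_algebra scale mul B
    by (intro finite_dim_comm_assoc_algebra.intro comm_assoc_algebra_axioms assms(1))
  obtain x0 y0 where "br x0 y0 \<noteq> 0"
    and ideals: "\<And>I. lie_ideal scale br I \<Longrightarrow> I = {0} \<or> I = UNIV"
    using simple unfolding simple_lie_def by blast
  then have "{v. \<forall>x. br x v = 0} = {0}"
    using lie_ideal_center by blast
  moreover have "br x e = 0" if "mul e e = e" for x e
    using br_eq_0_if_idempotent[OF that, of x] br_antisym[of x e] by simp
  ultimately have "e = 0" if "mul e e = e" for e
    using that by blast
  then have "\<exists>n. \<forall>x. (mul a ^^ n) x = 0" for a
    using mul_nilpotent_if_no_idempotent by metis
  then obtain v where "v \<noteq> 0" "\<And>a. mul a v = 0"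
    using annihilator_nonzero \<open>br x0 y0 \<noteq> 0\<close> by metis
  then have "{v. \<forall>x. mul x v = 0} = UNIV"
    using ideals[OF lie_ideal_annihilator] by blast
  then show ?thesis
    by blast
qed

end

locale admissible_poisson_algebra = vector_space sc
  for sc :: "complex \<Rightarrow> 'a::ab_group_add \<Rightarrow> 'a" +
  fixes m :: "'a \<Rightarrow> 'a \<Rightarrow> 'a"
  assumes admissible: "admissible_poisson sc m"
begin

lemma
  shows m_add_left: "m (x + y) z = m x z + m y z"
    and m_add_right: "m x (y + z) = m x y + m x z"
    and m_scale_left: "m (sc c x) y = sc c (m x y)"
    and m_scale_right: "m x (sc c y) = sc c (m x y)"
  using admissible by (simp_all add: admissible_poisson_def cbilinear_def)

lemma
  shows m_diff_left: "m (x - y) z = m x z - m y z"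
    and m_diff_right: "m x (y - z) = m x y - m x z"
  by (metis diff_add_cancel m_add_left add_diff_cancel)
     (metis diff_add_cancel m_add_right add_diff_cancel)

lemma scale_3: "sc 3 x = x + x + x"
  using scale_left_distrib[of 1 "1 + 1" x] scale_left_distrib[of 1 1 x] by (simp add: add.assoc)

lemma eq_0_if_triple_eq_0:
  fixes t :: 'a
  shows "t + t + t = 0 \<Longrightarrow> t = 0"
  using scale_3[of t] by simp

definition admissibility_defect :: "'a \<Rightarrow> 'a \<Rightarrow> 'a \<Rightarrow> 'a" where
  "admissibility_defect x y z = assoc m x y z + assoc m x y z + assoc m x y z -
     (m (m x z) y + m (m y z) x - m (m y x) z - m (m z x) y)"

lemma admissibility_defect_eq_0: "admissibility_defect x y z = 0"
  using admissible by (simp add: admissibility_defect_def admissible_poisson_def flip: scale_3)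

definition anticommutator :: "'a \<Rightarrow> 'a \<Rightarrow> 'a" where
  "anticommutator x y = m x y + m y x"

definition commutator :: "'a \<Rightarrow> 'a \<Rightarrow> 'a" where
  "commutator x y = m x y - m y x"

lemma anticommutator_assoc:
  "anticommutator (anticommutator x y) z = anticommutator x (anticommutator y z)"
proof -
  let ?T = "anticommutator (anticommutator x y) z - anticommutator x (anticommutator y z)"
  have "?T + ?T + ?T =
      admissibility_defect x y z + admissibility_defect x z y
      - admissibility_defect z x y - admissibility_defect z y x"
    by (simp add: admissibility_defect_def anticommutator_def assoc_def
        m_add_left m_add_right algebra_simps)
  also have "\<dots> = 0"
    by (simp add: admissibility_defect_eq_0)
  finally have "?T = 0"
    by (rule eq_0_if_triple_eq_0)
  then show ?thesis
    by simp
qed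

lemma commutator_leibniz:
  "commutator (anticommutator x y) z =
     anticommutator x (commutator y z) + anticommutator (commutator x z) y"
proof -
  let ?T = "commutator (anticommutator x y) z -
     (anticommutator x (commutator y z) + anticommutator (commutator x z) y)"
  have "?T + ?T + ?T =
      admissibility_defect x y z - admissibility_defect x z y
      + admissibility_defect y x z - admissibility_defect y z x
      + admissibility_defect z x y + admissibility_defect z y x"
    by (simp add: admissibility_defect_def anticommutator_def commutator_def assoc_def
        m_add_left m_add_right m_diff_left m_diff_right algebra_simps)
  also have "\<dots> = 0"
    by (simp add: admissibility_defect_eq_0)
  finally have "?T = 0"
    by (rule eq_0_if_triple_eq_0)
  then show ?thesis
    by simp
qed

lemma
  shows anticommutator_scale_left: "anticommutator (sc c x) y = sc c (anticommutator x y)"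
    and anticommutator_scale_right: "anticommutator x (sc c y) = sc c (anticommutator x y)"
    and commutator_scale_left: "commutator (sc c x) y = sc c (commutator x y)"
    and commutator_scale_right: "commutator x (sc c y) = sc c (commutator x y)"
  by (simp_all add: anticommutator_def commutator_def m_scale_left m_scale_right
      scale_right_distrib scale_right_diff_distrib)

lemma pbullet_eq: "pbullet sc m x y = sc (1/2) (anticommutator x y)"
  by (simp add: pbullet_def anticommutator_def)

lemma pbracket_eq: "pbracket sc m x y = sc (1/2) (commutator x y)"
  by (simp add: pbracket_def commutator_def)

sublocale leibniz_algebra sc "pbullet sc m" "pbracket sc m"
proof unfold_locales
  fix x y z :: 'a and c :: complex
  show "pbullet sc m x (y + z) = pbullet sc m x y + pbullet sc m x z"
    by (simp add: pbullet_def m_add_left m_add_right algebra_simps)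
  show "pbullet sc m x (sc c y) = sc c (pbullet sc m x y)"
    by (simp add: pbullet_def m_scale_left m_scale_right algebra_simps)
  show "pbullet sc m x y = pbullet sc m y x"
    by (simp add: pbullet_def add.commute)
  show "pbullet sc m (pbullet sc m x y) z = pbullet sc m x (pbullet sc m y z)"
    by (simp add: pbullet_eq anticommutator_scale_left anticommutator_scale_right
        anticommutator_assoc)
  show "pbracket sc m x (y + z) = pbracket sc m x y + pbracket sc m x z"
    by (simp add: pbracket_def m_add_left m_add_right algebra_simps)
  show "pbracket sc m x (sc c y) = sc c (pbracket sc m x y)"
    by (simp add: pbracket_def m_scale_left m_scale_right algebra_simps)
  show "pbracket sc m x y = - pbracket sc m y x"
    by (simp add: pbracket_def flip: scale_minus_right)
  show "pbracket sc m (pbullet sc m x y) z =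
      pbullet sc m x (pbracket sc m y z) + pbullet sc m (pbracket sc m x z) y"
    by (simp add: pbullet_eq pbracket_eq anticommutator_scale_left anticommutator_scale_right
        commutator_scale_left commutator_scale_right commutator_leibniz scale_right_distrib)
qed

end

theorem mainTheorem13:
  fixes sc :: "complex \<Rightarrow> 'a::ab_group_add \<Rightarrow> 'a"
    and m :: "'a \<Rightarrow> 'a \<Rightarrow> 'a"
  assumes "vector_space sc"
    and "cfinite_dim sc"
    and "admissible_poisson sc m"
    and "simple_lie sc (pbracket sc m)"
  shows "\<forall>U V. pbullet sc m U V = 0"
proof -
  interpret admissible_poisson_algebra sc m
    using assms(1,3)
    by (intro admissible_poisson_algebra.intro admissible_poisson_algebra_axioms.intro)
  obtain S where "finite S" "span S = UNIV"
    using assms(2) unfolding cfinite_dim_def by blast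
  then obtain B where "finite_dimensional_vector_space sc B"
    by (rule finite_dimensional_if_finite_span)
  then show ?thesis
    using mul_eq_zero_if_simple_lie assms(4) by blast
qed

end
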